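(* Let $1<p<2$, $q=1/p$, and let $k\ge1$ be an integer. Then the maximum of $P_k(y) = \sum_{i=1}^k y_i^q \prod_{j\ne i}(1-y_j)^q$ over $y\in\Delta_k$ is attained either at a standard basis vector (where $P_k=1$) or at the vector $(1/k,\dots,1/k)$ (where $P_k=\theta(k)$). In particular $w(k,p)=\max\{1,\theta(k)\}$.
   Context: $\Delta_k=\{y\in\mathbb R^k: y_i\ge 0,\ \sum_i y_i=1\}$; $w(k,p)=\max_{y\in\Delta_k}P_k(y)$. For integer $k\ge2$, $\theta(k) = k\left(\frac{(k-1)^{k-1}}{k^k}\right)^q$, and $\theta(1)=1$. *)

theory Defs
  imports "HOL-Analysis.Analysis"
begin

text \<open>Points of R^k are represented as functions nat => real; only the coordinates
  0..k-1 are relevant. Coordinates are indexed from 0 instead of 1.\<close>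

definition std_simplex :: "nat \<Rightarrow> (nat \<Rightarrow> real) set" where
  "std_simplex k = {y. (\<forall>i<k. 0 \<le> y i) \<and> (\<Sum>i<k. y i) = 1}"

definition Pk :: "nat \<Rightarrow> real \<Rightarrow> (nat \<Rightarrow> real) \<Rightarrow> real" where
  "Pk k p y = (let q = 1 / p in
     (\<Sum>i<k. y i powr q * (\<Prod>j\<in>{..<k} - {i}. (1 - y j) powr q)))"

definition w :: "nat \<Rightarrow> real \<Rightarrow> real" where
  "w k p = (SUP y\<in>std_simplex k. Pk k p y)"

definition theta :: "nat \<Rightarrow> real \<Rightarrow> real" where
  "theta k p = (if k = 1 then 1 else
     real k * ((real (k - 1) ^ (k - 1) / real k ^ k) powr (1 / p)))"

definition basis_vec :: "nat \<Rightarrow> nat \<Rightarrow> real" where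
  "basis_vec i = (\<lambda>j. if j = i then 1 else 0)"

definition uniform_vec :: "nat \<Rightarrow> nat \<Rightarrow> real" where
  "uniform_vec k = (\<lambda>j. if j < k then 1 / real k else 0)"

end

theory Submission
  imports Defs
begin

text \<open>
  Put q = 1/p and r = q/(1-q) = 1/(p-1), so that r > 1 exactly because p < 2. Hoelder's
  inequality with exponents 1/q and 1/(1-q) gives Pk(y) \<le> Fk(y)^(1-q), where Fk(y) is the
  sum over i of the products over j \<noteq> i of (1 - y j)^r, with equality at the vertices and
  at the barycentre. So it suffices to show that Fk attains its maximum over the simplex at a
  vertex or at the barycentre.

  Let z be a maximizer that is not a vertex and move two coordinates z i < z j symmetrically
  about their mean, 1 - z i = M + d, 1 - z j = M - d. Then Fk becomes
  A (M-d)^r (M+d)^r + B ((M-d)^r + (M+d)^r), whose derivative in d has the sign of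
  B g(d)/d - 2A with g(d) = (M-d)^(1-r) - (M+d)^(1-r); since g is convex with g(0) = 0,
  g(d)/d is increasing. Hence either merging the two coordinates or spreading them further
  apart increases Fk. Thus all positive coordinates of z are equal, and a zero coordinate is
  ruled out by comparing A and B directly, so z is the barycentre.
\<close>

lemma power_powr_commute: "0 \<le> x \<Longrightarrow> (x ^ n) powr s = (x powr s) ^ n"
  for x s :: real
  by (induction n) (auto simp: powr_mult)

lemma max_one_powr:
  fixes a e :: real
  assumes "0 \<le> a" "0 \<le> e"
  shows "max 1 a powr e = max 1 (a powr e)"
proof (cases "a \<le> 1")
  case True
  then have "a powr e \<le> 1" using assms by (intro powr_le1) auto
  with True show ?thesis by (simp add: max_def)
next
  case False
  then have "1 \<le> a powr e" using assms by (intro ge_one_powr_ge_zero) auto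
  with False show ?thesis by (simp add: max_def)
qed

lemma Youngs_inequality_0_nonneg:
  fixes a b q :: real
  assumes "0 \<le> a" "0 \<le> b" "0 \<le> q" "q \<le> 1"
  shows "a powr q * b powr (1 - q) \<le> q * a + (1 - q) * b"
  using Youngs_inequality_0 [of q "1 - q" a b] assms by (cases "a = 0 \<or> b = 0") auto

lemma sum_powr_mult_le_powr_sum:
  fixes a b :: "'a \<Rightarrow> real"
  assumes a: "\<And>i. i \<in> I \<Longrightarrow> 0 \<le> a i" "sum a I = 1"
    and b: "\<And>i. i \<in> I \<Longrightarrow> 0 \<le> b i" and q: "0 \<le> q" "q \<le> 1"
  shows "(\<Sum>i\<in>I. a i powr q * b i powr (1 - q)) \<le> sum b I powr (1 - q)"
proof -
  define T where "T = sum b I"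
  have "finite I" using a(2) sum.infinite by fastforce
  show ?thesis
  proof (cases "T = 0")
    case True
    then have "b i = 0" if "i \<in> I" for i
      using sum_nonneg_eq_0_iff [OF \<open>finite I\<close>] b that unfolding T_def by blast
    then show ?thesis by simp
  next
    case False
    then have T: "T > 0" unfolding T_def using b sum_nonneg order_le_less by metis
    have "a i powr q * b i powr (1 - q) \<le> (q * a i + (1 - q) * (b i / T)) * T powr (1 - q)"
      if "i \<in> I" for i
    proof -
      have "a i powr q * b i powr (1 - q) = a i powr q * (b i / T) powr (1 - q) * T powr (1 - q)"
        using T by (simp add: powr_divide)
      also have "\<dots> \<le> (q * a i + (1 - q) * (b i / T)) * T powr (1 - q)"
        using a b q T that by (intro mult_right_mono Youngs_inequality_0_nonneg) auto
      finally show ?thesis .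
    qed
    then have "(\<Sum>i\<in>I. a i powr q * b i powr (1 - q))
        \<le> (\<Sum>i\<in>I. q * a i + (1 - q) * (b i / T)) * T powr (1 - q)"
      by (simp add: sum_distrib_right sum_mono)
    also have "(\<Sum>i\<in>I. q * a i + (1 - q) * (b i / T)) = 1"
      using a(2) T
      by (simp add: sum.distrib flip: sum_distrib_left sum_divide_distrib, simp add: T_def)
    finally show ?thesis by (simp add: T_def)
  qed
qed

section \<open>Moving two coordinates apart\<close>

definition powr_gap :: "real \<Rightarrow> real \<Rightarrow> real \<Rightarrow> real" where
  "powr_gap r M d = (M - d) powr (1 - r) - (M + d) powr (1 - r)"

text \<open>Fk as a function of d when only the coordinates i and j move, with 1 - y i = M + d and
  1 - y j = M - d; the other coordinates enter through A and B only.\<close>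

definition pair_fun :: "real \<Rightarrow> real \<Rightarrow> real \<Rightarrow> real \<Rightarrow> real \<Rightarrow> real" where
  "pair_fun r A B M d = (M - d) powr r * (M + d) powr r * A + ((M - d) powr r + (M + d) powr r) * B"

lemma powr_gap_has_real_derivative:
  assumes "-M < d" "d < M"
  shows "(powr_gap r M has_real_derivative
           (r - 1) * ((M - d) powr (-r) + (M + d) powr (-r))) (at d)"
proof -
  have "(powr_gap r M has_real_derivative
      (1 - r) * (M - d) powr (1 - r - 1) * (-1) - (1 - r) * (M + d) powr (1 - r - 1) * 1) (at d)"
    unfolding powr_gap_def [abs_def] using assms
    by (intro DERIV_diff DERIV_fun_powr [simplified] derivative_eq_intros) auto
  then show ?thesis by (simp add: algebra_simps)
qed

lemma powr_sum_has_real_derivative: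
  assumes "-M < d" "d < M"
  shows "((\<lambda>d. (M - d) powr (-r) + (M + d) powr (-r)) has_real_derivative
           r * ((M - d) powr (-r - 1) - (M + d) powr (-r - 1))) (at d)"
proof -
  have "((\<lambda>d. (M - d) powr (-r) + (M + d) powr (-r)) has_real_derivative
      -r * (M - d) powr (-r - 1) * (-1) + -r * (M + d) powr (-r - 1) * 1) (at d)"
    using assms by (intro DERIV_add DERIV_fun_powr [simplified] derivative_eq_intros) auto
  then show ?thesis by (simp add: algebra_simps)
qed

lemma powr_gap_lt_mult_deriv:
  assumes r: "r > 1" and d: "0 < d" "d < M"
  shows "powr_gap r M d < d * ((r - 1) * ((M - d) powr (-r) + (M + d) powr (-r)))"
proof -
  define w where
    "w x = x * ((r - 1) * ((M - x) powr (-r) + (M + x) powr (-r))) - powr_gap r M x" for x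
  \<comment> \<open>w x = x g'(x) - g(x) for g = powr_gap r M; it vanishes at 0 and w' x = x g''(x) > 0.\<close>
  have w_deriv: "(w has_real_derivative
      x * ((r - 1) * (r * ((M - x) powr (-r - 1) - (M + x) powr (-r - 1))))) (at x)"
    if "-M < x" "x < M" for x
    unfolding w_def [abs_def]
    by (rule derivative_eq_intros powr_sum_has_real_derivative powr_gap_has_real_derivative
          that refl)+ (simp add: algebra_simps)
  have "w 0 < w d"
  proof (rule DERIV_pos_imp_increasing_open [OF d(1)])
    fix x assume x: "0 < x" "x < d"
    have "(M + x) powr (-r - 1) < (M - x) powr (-r - 1)"
      using x d r by (intro powr_less_mono2_neg) auto
    then have "0 < x * ((r - 1) * (r * ((M - x) powr (-r - 1) - (M + x) powr (-r - 1))))"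
      using x r by simp
    then show "\<exists>y. (w has_real_derivative y) (at x) \<and> 0 < y"
      using w_deriv [of x] x d by auto
  next
    show "continuous_on {0..d} w"
      using d by (intro continuous_at_imp_continuous_on ballI DERIV_isCont [OF w_deriv]) auto
  qed
  then show ?thesis by (simp add: w_def powr_gap_def)
qed

lemma powr_gap_div_strict_mono:
  assumes "r > 1" "0 < d1" "d1 < d2" "d2 < M"
  shows "powr_gap r M d1 / d1 < powr_gap r M d2 / d2"
proof (rule DERIV_pos_imp_increasing [OF assms(3)])
  fix x assume x: "d1 \<le> x" "x \<le> d2"
  let ?g' = "(r - 1) * ((M - x) powr (-r) + (M + x) powr (-r))"
  have "((\<lambda>x. powr_gap r M x / x) has_real_derivative
      (?g' * x - powr_gap r M x * 1) / (x * x)) (at x)"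
    using x assms by (intro DERIV_divide powr_gap_has_real_derivative DERIV_ident) auto
  moreover have "(?g' * x - powr_gap r M x * 1) / (x * x) > 0"
    using powr_gap_lt_mult_deriv [of r x M] x assms by (simp add: algebra_simps)
  ultimately show "\<exists>y. ((\<lambda>x. powr_gap r M x / x) has_real_derivative y) (at x) \<and> 0 < y"
    by blast
qed

lemma pair_fun_has_real_derivative:
  assumes "-M < d" "d < M"
  shows "(pair_fun r A B M has_real_derivative
           r * (M - d) powr (r - 1) * (M + d) powr (r - 1) * (B * powr_gap r M d - 2 * d * A))
         (at d)"
proof -
  have pos: "M - d > 0" "M + d > 0" using assms by auto
  have minus: "((\<lambda>d. M - d) has_real_derivative -1) (at d)"
    and plus: "((\<lambda>d. M + d) has_real_derivative 1) (at d)"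
    by (auto intro!: derivative_eq_intros)
  have "(pair_fun r A B M has_real_derivative
      ((M - d) powr r * (r * (M + d) powr (r - 1) * 1)
        + r * (M - d) powr (r - 1) * (-1) * (M + d) powr r) * A
      + (r * (M - d) powr (r - 1) * (-1) + r * (M + d) powr (r - 1) * 1) * B) (at d)"
    unfolding pair_fun_def [abs_def]
    by (intro DERIV_add DERIV_mult' DERIV_cmult_right DERIV_fun_powr [simplified] minus plus pos
          DERIV_const)
  moreover
  have powr_r: "(M - d) powr r = (M - d) powr (r - 1) * (M - d)"
    "(M + d) powr r = (M + d) powr (r - 1) * (M + d)"
    using pos by (simp_all add: powr_diff)
  have powr_cancel: "(M - d) powr (r - 1) * (M - d) powr (1 - r) = 1"
    "(M + d) powr (r - 1) * (M + d) powr (1 - r) = 1"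
    using pos by (simp_all flip: powr_add)
  have "((M - d) powr r * (r * (M + d) powr (r - 1) * 1)
        + r * (M - d) powr (r - 1) * (-1) * (M + d) powr r) * A
      + (r * (M - d) powr (r - 1) * (-1) + r * (M + d) powr (r - 1) * 1) * B
      = B * r * (M + d) powr (r - 1) - B * r * (M - d) powr (r - 1)
        - 2 * d * A * r * (M - d) powr (r - 1) * (M + d) powr (r - 1)"
    unfolding powr_r by (simp add: algebra_simps)
  also have "\<dots> = B * r * ((M - d) powr (r - 1) * (M - d) powr (1 - r)) * (M + d) powr (r - 1)
        - B * r * (M - d) powr (r - 1) * ((M + d) powr (r - 1) * (M + d) powr (1 - r))
        - 2 * d * A * r * (M - d) powr (r - 1) * (M + d) powr (r - 1)"
    unfolding powr_cancel by simp
  also have "\<dots> = r * (M - d) powr (r - 1) * (M + d) powr (r - 1) * (B * powr_gap r M d - 2 * d * A)"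
    unfolding powr_gap_def by (simp add: algebra_simps)
  finally show ?thesis by simp
qed

lemma pair_fun_continuous_on:
  assumes "-M < a" "b < M"
  shows "continuous_on {a..b} (pair_fun r A B M)"
  using assms
  by (intro continuous_at_imp_continuous_on ballI DERIV_isCont [OF pair_fun_has_real_derivative])
    auto

lemma pair_fun_deriv_sign:
  assumes "r > 0" "0 < x" "x < M"
  shows "\<exists>D. (pair_fun r A B M has_real_derivative D) (at x)
           \<and> sgn D = sgn (B * (powr_gap r M x / x) - 2 * A)"
proof -
  have "B * powr_gap r M x - 2 * x * A = x * (B * (powr_gap r M x / x) - 2 * A)"
    using assms by (simp add: field_simps)
  then show ?thesis
    using pair_fun_has_real_derivative [of M x r A B] assms
    by (intro exI [of _ "r * (M - x) powr (r - 1) * (M + x) powr (r - 1)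
          * (B * powr_gap r M x - 2 * x * A)"]) (auto simp: sgn_mult)
qed

lemma pair_fun_less_center:
  assumes r: "r > 1" and B: "B > 0" and d0: "0 < d0" "d0 < M"
    and balance: "B * powr_gap r M d0 \<le> 2 * d0 * A"
  shows "pair_fun r A B M d0 < pair_fun r A B M 0"
proof (rule DERIV_neg_imp_decreasing_open [OF d0(1)])
  fix x assume x: "0 < x" "x < d0"
  have "B * (powr_gap r M x / x) < B * (powr_gap r M d0 / d0)"
    using r x d0 B by (intro mult_strict_left_mono powr_gap_div_strict_mono) auto
  also have "\<dots> \<le> 2 * A"
    using balance d0 by (simp add: field_simps)
  finally show "\<exists>D. (pair_fun r A B M has_real_derivative D) (at x) \<and> D < 0"
    using pair_fun_deriv_sign [of r x M A B] r x d0 by (auto simp: sgn_if split: if_splits)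
qed (use d0 in \<open>auto intro: pair_fun_continuous_on\<close>)

lemma pair_fun_less_outward:
  assumes r: "r > 1" and B: "B > 0" and d: "0 < d0" "d0 < d" "d < M"
    and imbalance: "2 * d0 * A < B * powr_gap r M d0"
  shows "pair_fun r A B M d0 < pair_fun r A B M d"
proof (rule DERIV_pos_imp_increasing_open [OF d(2)])
  fix x assume x: "d0 < x" "x < d"
  have "2 * A < B * (powr_gap r M d0 / d0)"
    using imbalance d by (simp add: field_simps)
  also have "\<dots> < B * (powr_gap r M x / x)"
    using r x d B by (intro mult_strict_left_mono powr_gap_div_strict_mono) auto
  finally show "\<exists>D. (pair_fun r A B M has_real_derivative D) (at x) \<and> D > 0"
    using pair_fun_deriv_sign [of r x M A B] r x d by (auto simp: sgn_if split: if_splits)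
qed (use d in \<open>auto intro: pair_fun_continuous_on\<close>)

definition sum_prod_omit :: "'a set \<Rightarrow> ('a \<Rightarrow> 'b::comm_semiring_1) \<Rightarrow> 'b" where
  "sum_prod_omit I f = (\<Sum>i\<in>I. \<Prod>j\<in>I - {i}. f j)"

lemma sum_prod_omit_insert:
  assumes "finite I" "i \<notin> I"
  shows "sum_prod_omit (insert i I) f = f i * sum_prod_omit I f + prod f I"
proof -
  have "(\<Prod>j\<in>insert i I - {l}. f j) = f i * (\<Prod>j\<in>I - {l}. f j)" if "l \<in> I" for l
  proof -
    have "insert i I - {l} = insert i (I - {l})" using that assms by auto
    then show ?thesis using assms by simp
  qed
  moreover have "insert i I - {i} = I" using assms by auto
  ultimately show ?thesis
    unfolding sum_prod_omit_def using assms by (simp add: sum_distrib_left add.commute)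
qed

lemma sum_prod_omit_insert2:
  assumes "finite I" "i \<notin> I" "j \<notin> I" "i \<noteq> j"
  shows "sum_prod_omit (insert i (insert j I)) f
           = f i * f j * sum_prod_omit I f + (f i + f j) * prod f I"
  using assms by (simp add: sum_prod_omit_insert algebra_simps)

lemma sum_prod_omit_const: "sum_prod_omit I (\<lambda>_. c) = of_nat (card I) * c ^ (card I - 1)"
  unfolding sum_prod_omit_def by (cases "finite I") (simp_all add: card_Diff_singleton)

lemma sum_prod_omit_nonneg:
  fixes f :: "'a \<Rightarrow> 'b::linordered_semidom"
  shows "(\<And>i. i \<in> I \<Longrightarrow> 0 \<le> f i) \<Longrightarrow> 0 \<le> sum_prod_omit I f"
  unfolding sum_prod_omit_def by (intro sum_nonneg prod_nonneg) auto

lemma sum_prod_omit_lower_bound: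
  fixes f :: "'a \<Rightarrow> real"
  assumes "finite R" "P \<subseteq> R" "\<And>l. l \<in> R \<Longrightarrow> 0 \<le> f l" "\<And>l. l \<in> P \<Longrightarrow> f l = c" "0 \<le> c"
  shows "real (card P) * prod f R \<le> c * sum_prod_omit R f"
proof -
  have "c * (\<Prod>j\<in>R - {l}. f j) = prod f R" if "l \<in> P" for l
    using assms that prod.remove [of R l f] by auto
  then have "real (card P) * prod f R = c * (\<Sum>l\<in>P. \<Prod>j\<in>R - {l}. f j)"
    by (simp add: sum_distrib_left)
  also have "\<dots> \<le> c * sum_prod_omit R f"
    unfolding sum_prod_omit_def
    using assms by (intro mult_left_mono sum_mono2 prod_nonneg) auto
  finally show ?thesis .
qed

lemma std_simplex_le_one:
  assumes "y \<in> std_simplex k" "i < k"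
  shows "y i \<le> 1"
proof -
  have "y i \<le> (\<Sum>j<k. y j)"
    using assms by (intro member_le_sum) (auto simp: std_simplex_def)
  then show ?thesis using assms(1) by (simp add: std_simplex_def)
qed

lemma std_simplex_vertex:
  assumes "y \<in> std_simplex k" "i < k" "y i = 1" "j < k" "j \<noteq> i"
  shows "y j = 0"
proof -
  have "(\<Sum>l<k. y l) = y i + (\<Sum>l\<in>{..<k} - {i}. y l)"
    using assms by (simp add: sum.remove)
  then have "(\<Sum>l\<in>{..<k} - {i}. y l) = 0"
    using assms by (simp add: std_simplex_def)
  then show ?thesis
    using assms sum_nonneg_eq_0_iff [of "{..<k} - {i}" y] by (auto simp: std_simplex_def)
qed

lemma basis_vec_mem_std_simplex: "i < k \<Longrightarrow> basis_vec i \<in> std_simplex k"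
  unfolding std_simplex_def basis_vec_def by (auto simp: sum.delta)

text \<open>std_simplex leaves the coordinates beyond k unconstrained; fixing them to 0 makes
  the set compact.\<close>

definition std_simplex_trunc :: "nat \<Rightarrow> (nat \<Rightarrow> real) set" where
  "std_simplex_trunc k = {y \<in> std_simplex k. \<forall>i\<ge>k. y i = 0}"

lemma compact_std_simplex_trunc: "compact (std_simplex_trunc k)"
proof -
  define X where "X i = (if i < k then {0..1::real} else {0})" for i
  have "compactin (product_topology (\<lambda>i. euclidean) UNIV) (PiE UNIV X)"
    by (subst compactin_PiE) (auto simp: X_def)
  then have "compact (PiE UNIV X)"
    by (simp add: euclidean_product_topology)
  moreover have "closed {y::nat \<Rightarrow> real. (\<Sum>i<k. y i) = 1}"
    by (intro closed_Collect_eq continuous_intros continuous_on_product_coordinates)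
  moreover have "std_simplex_trunc k = PiE UNIV X \<inter> {y. (\<Sum>i<k. y i) = 1}"
    by (auto simp: std_simplex_trunc_def X_def PiE_UNIV_domain Pi_iff std_simplex_le_one
        split: if_splits) (auto simp: std_simplex_def)
  ultimately show ?thesis by (simp add: compact_Int_closed)
qed

lemma restrict_mem_std_simplex_trunc:
  "y \<in> std_simplex k \<Longrightarrow> (\<lambda>i. if i < k then y i else 0) \<in> std_simplex_trunc k"
  by (simp add: std_simplex_trunc_def std_simplex_def)

lemma uniform_vec_mem_std_simplex_trunc: "k \<ge> 1 \<Longrightarrow> uniform_vec k \<in> std_simplex_trunc k"
  by (simp add: std_simplex_trunc_def std_simplex_def uniform_vec_def)

section \<open>Maximizing Fk\<close>

definition Fk :: "nat \<Rightarrow> real \<Rightarrow> (nat \<Rightarrow> real) \<Rightarrow> real" where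
  "Fk k r y = sum_prod_omit {..<k} (\<lambda>j. (1 - y j) powr r)"

lemma Fk_cong: "(\<And>i. i < k \<Longrightarrow> y i = z i) \<Longrightarrow> Fk k r y = Fk k r z"
  unfolding Fk_def sum_prod_omit_def by (intro sum.cong prod.cong) auto

lemma Fk_nonneg: "0 \<le> Fk k r y"
  unfolding Fk_def by (intro sum_prod_omit_nonneg) auto

lemma continuous_on_Fk:
  assumes "r > 0"
  shows "continuous_on (std_simplex_trunc k) (Fk k r)"
proof -
  have "0 \<le> 1 - y j" if "y \<in> std_simplex_trunc k" for y j
    using that std_simplex_le_one [of y k j] by (cases "j < k") (auto simp: std_simplex_trunc_def)
  then have "continuous_on (std_simplex_trunc k) (\<lambda>y. (1 - y j) powr r)" for j
    using assms
    by (intro continuous_on_powr' continuous_intros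
        continuous_on_subset [OF continuous_on_product_coordinates]) auto
  then show ?thesis
    unfolding Fk_def [abs_def] sum_prod_omit_def
    by (intro continuous_on_sum continuous_on_prod)
qed

lemma Fk_basis_vec:
  assumes "i < k"
  shows "Fk k r (basis_vec i) = 1"
proof -
  have "{..<k} = insert i ({..<k} - {i})" using assms by auto
  then have "Fk k r (basis_vec i)
      = sum_prod_omit (insert i ({..<k} - {i})) (\<lambda>j. (1 - basis_vec i j) powr r)"
    unfolding Fk_def by simp
  also have "\<dots> = 1"
    by (subst sum_prod_omit_insert) (auto simp: basis_vec_def intro: prod.neutral)
  finally show ?thesis .
qed

lemma Fk_uniform_vec: "Fk k r (uniform_vec k) = real k * ((1 - 1 / real k) powr r) ^ (k - 1)"
proof -
  have "Fk k r (uniform_vec k) = sum_prod_omit {..<k} (\<lambda>_. (1 - 1 / real k) powr r)"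
    unfolding Fk_def sum_prod_omit_def uniform_vec_def by (intro sum.cong prod.cong) auto
  then show ?thesis by (simp add: sum_prod_omit_const)
qed

definition spread :: "(nat \<Rightarrow> real) \<Rightarrow> nat \<Rightarrow> nat \<Rightarrow> real \<Rightarrow> nat \<Rightarrow> real" where
  "spread z i j d = z(i := (z i + z j) / 2 - d, j := (z i + z j) / 2 + d)"

lemma spread_half_diff: "i \<noteq> j \<Longrightarrow> spread z i j ((z j - z i) / 2) = z"
  unfolding spread_def by (rule ext) (auto simp: field_simps)

lemma spread_mem_std_simplex_trunc:
  assumes z: "z \<in> std_simplex_trunc k" and ij: "i < k" "j < k" "i \<noteq> j"
    and d: "\<bar>d\<bar> \<le> (z i + z j) / 2"
  shows "spread z i j d \<in> std_simplex_trunc k"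
proof -
  define R where "R = {..<k} - {i, j}"
  have K: "{..<k} = insert i (insert j R)" and R: "finite R" "i \<notin> R" "j \<notin> R"
    using ij by (auto simp: R_def)
  then have split: "sum y {..<k} = y i + y j + sum y R" for y :: "nat \<Rightarrow> real"
    using ij by (simp add: add.assoc)
  have "sum (spread z i j d) R = sum z R"
    by (intro sum.cong) (auto simp: R_def spread_def)
  then have "sum (spread z i j d) {..<k} = sum z {..<k}"
    unfolding split using ij by (simp add: spread_def)
  moreover have "0 \<le> (z i + z j) / 2 - d" "0 \<le> (z i + z j) / 2 + d"
    using d by linarith+
  ultimately show ?thesis
    using z ij by (auto simp: std_simplex_trunc_def std_simplex_def spread_def)
qed

lemma Fk_spread:
  fixes z :: "nat \<Rightarrow> real" and r d :: real
  assumes ij: "i < k" "j < k" "i \<noteq> j"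
  defines "R \<equiv> {..<k} - {i, j}" and "f \<equiv> \<lambda>l. (1 - z l) powr r"
  shows "Fk k r (spread z i j d)
    = pair_fun r (sum_prod_omit R f) (prod f R) (1 - (z i + z j) / 2) d"
proof -
  let ?g = "\<lambda>l. (1 - spread z i j d l) powr r"
  have K: "{..<k} = insert i (insert j R)" unfolding R_def using ij by auto
  have "Fk k r (spread z i j d)
      = ?g i * ?g j * sum_prod_omit R ?g + (?g i + ?g j) * prod ?g R"
    unfolding Fk_def K using ij by (intro sum_prod_omit_insert2) (auto simp: R_def)
  moreover have "sum_prod_omit R ?g = sum_prod_omit R f" "prod ?g R = prod f R"
    unfolding sum_prod_omit_def R_def f_def spread_def by (auto intro!: sum.cong prod.cong)
  ultimately show ?thesis
    using ij unfolding pair_fun_def spread_def by (simp add: algebra_simps)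
qed

context
  fixes k :: nat and r :: real and z :: "nat \<Rightarrow> real"
  assumes r: "r > 1"
    and z_mem: "z \<in> std_simplex_trunc k"
    and z_max: "\<And>y. y \<in> std_simplex_trunc k \<Longrightarrow> Fk k r y \<le> Fk k r z"
    and z_lt_1: "\<And>i. i < k \<Longrightarrow> z i < 1"
begin

lemma maximizer_nonneg: "i < k \<Longrightarrow> 0 \<le> z i"
  using z_mem by (simp add: std_simplex_trunc_def std_simplex_def)

lemma maximizer_pair_fun:
  assumes ij: "i < k" "j < k" "i \<noteq> j"
  defines "R \<equiv> {..<k} - {i, j}" and "f \<equiv> \<lambda>l. (1 - z l) powr r"
  shows "0 < prod f R"
    and "Fk k r z
          = pair_fun r (sum_prod_omit R f) (prod f R) (1 - (z i + z j) / 2) ((z j - z i) / 2)"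
    and "\<bar>d\<bar> \<le> (z i + z j) / 2
          \<Longrightarrow> pair_fun r (sum_prod_omit R f) (prod f R) (1 - (z i + z j) / 2) d \<le> Fk k r z"
proof -
  show "0 < prod f R"
    unfolding f_def R_def by (intro prod_pos) (auto dest: z_lt_1)
  show "Fk k r z
      = pair_fun r (sum_prod_omit R f) (prod f R) (1 - (z i + z j) / 2) ((z j - z i) / 2)"
    using Fk_spread [OF ij, of r z "(z j - z i) / 2"]
    unfolding spread_half_diff [OF ij(3)] R_def f_def .
  assume "\<bar>d\<bar> \<le> (z i + z j) / 2"
  then have "spread z i j d \<in> std_simplex_trunc k"
    using ij by (intro spread_mem_std_simplex_trunc z_mem)
  then show "pair_fun r (sum_prod_omit R f) (prod f R) (1 - (z i + z j) / 2) d \<le> Fk k r z"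
    using Fk_spread [OF ij, of r z d] z_max unfolding R_def f_def by metis
qed

text \<open>Otherwise bringing z i and z j together would increase Fk.\<close>

lemma maximizer_imbalance:
  assumes ij: "i < k" "j < k" "i \<noteq> j" and lt: "z i < z j"
  defines "R \<equiv> {..<k} - {i, j}" and "f \<equiv> \<lambda>l. (1 - z l) powr r"
  shows "2 * ((z j - z i) / 2) * sum_prod_omit R f
           < prod f R * powr_gap r (1 - (z i + z j) / 2) ((z j - z i) / 2)"
proof (rule ccontr)
  assume "\<not> ?thesis"
  moreover have "(z j - z i) / 2 < 1 - (z i + z j) / 2"
    using z_lt_1 [OF ij(2)] by (simp add: field_simps)
  ultimately have "pair_fun r (sum_prod_omit R f) (prod f R) (1 - (z i + z j) / 2) ((z j - z i) / 2)
      < pair_fun r (sum_prod_omit R f) (prod f R) (1 - (z i + z j) / 2) 0"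
    using r lt maximizer_pair_fun(1) [OF ij] unfolding R_def f_def
    by (intro pair_fun_less_center) auto
  moreover have "0 \<le> z i" "0 \<le> z j" using ij maximizer_nonneg by auto
  ultimately show False
    using maximizer_pair_fun(2) [OF ij] maximizer_pair_fun(3) [OF ij, of 0]
    unfolding R_def f_def by simp
qed

lemma maximizer_pos_coords_eq:
  assumes i: "i < k" "0 < z i" and j: "j < k" "0 < z j"
  shows "z i = z j"
proof -
  have not_lt: "\<not> z i < z j" if i: "i < k" "0 < z i" and j: "j < k" for i j
  proof
    assume lt: "z i < z j"
    then have ij: "i \<noteq> j" by auto
    define R where "R = {..<k} - {i, j}"
    define f where "f l = (1 - z l) powr r" for l
    define M where "M = 1 - (z i + z j) / 2"
    define d0 where "d0 = (z j - z i) / 2"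
    define d where "d = d0 + min (z i) (1 - z j) / 2"
    have "d0 < d" "d < M" "\<bar>d\<bar> \<le> (z i + z j) / 2" "0 < d0"
      using i lt z_lt_1 [OF j] unfolding d_def d0_def M_def by (auto simp: min_def field_simps)
    then have "pair_fun r (sum_prod_omit R f) (prod f R) M d0
        < pair_fun r (sum_prod_omit R f) (prod f R) M d"
      using r maximizer_pair_fun(1) [OF i(1) j ij] maximizer_imbalance [OF i(1) j ij lt]
      unfolding R_def f_def M_def d0_def by (intro pair_fun_less_outward) auto
    then show False
      using maximizer_pair_fun(2) [OF i(1) j ij] maximizer_pair_fun(3) [OF i(1) j ij, of d]
        \<open>\<bar>d\<bar> \<le> _\<close>
      unfolding R_def f_def M_def d0_def by simp
  qed
  show ?thesis using not_lt [OF i j(1)] not_lt [OF j i(1)] by linarith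
qed

text \<open>All positive coordinates equal z i, so there are 1 / z i of them, and each one other than i
  contributes prod f R / (1 - z i) powr r to sum_prod_omit R f.\<close>

lemma maximizer_rest_lower_bound:
  assumes j: "j < k" "z j = 0" and i: "i < k" "0 < z i"
  defines "R \<equiv> {..<k} - {j, i}" and "f \<equiv> \<lambda>l. (1 - z l) powr r"
  shows "(1 - z i) powr (1 - r) * prod f R \<le> z i * sum_prod_omit R f"
proof -
  define v where "v = z i"
  define P where "P = {l \<in> {..<k}. 0 < z l}"
  have v: "0 < v" "v < 1" using i z_lt_1 unfolding v_def by auto
  have zP: "z l = v" if "l \<in> P" for l
    using that i maximizer_pos_coords_eq unfolding P_def v_def by auto
  have "sum z {..<k} = sum z P"
    using maximizer_nonneg by (intro sum.mono_neutral_right) (auto simp: P_def order_le_less)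
  then have card_P: "real (card P) * v = 1"
    using z_mem zP by (simp add: std_simplex_trunc_def std_simplex_def)
  have "P - {i} \<subseteq> R" using j by (auto simp: P_def R_def)
  moreover have "f l = (1 - v) powr r" if "l \<in> P - {i}" for l
    using zP that by (simp add: f_def)
  ultimately have "real (card (P - {i})) * prod f R \<le> (1 - v) powr r * sum_prod_omit R f"
    by (intro sum_prod_omit_lower_bound) (auto simp: R_def f_def)
  moreover have "i \<in> P" "finite P" using i by (auto simp: P_def)
  then have "real (card (P - {i})) = real (card P) - 1"
    using card_gt_0_iff [of P] by (auto simp: card_Diff_singleton of_nat_diff)
  ultimately have "v * ((real (card P) - 1) * prod f R) \<le> v * ((1 - v) powr r * sum_prod_omit R f)"
    using v by (intro mult_left_mono) auto
  moreover have "v * ((real (card P) - 1) * prod f R) = (1 - v) * prod f R"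
    using card_P by (simp add: algebra_simps)
  ultimately have "(1 - v) * prod f R \<le> v * ((1 - v) powr r * sum_prod_omit R f)"
    by simp
  then show ?thesis
    using v by (simp add: v_def powr_diff field_simps)
qed

lemma maximizer_pos:
  assumes j: "j < k"
  shows "0 < z j"
proof (rule ccontr)
  assume "\<not> 0 < z j"
  then have zj: "z j = 0" using maximizer_nonneg [OF j] by simp
  have "sum z {..<k} = 1" using z_mem by (simp add: std_simplex_trunc_def std_simplex_def)
  then obtain i where i: "i < k" "0 < z i"
    using sum_nonpos [of "{..<k}" z] by (metis lessThan_iff not_le zero_less_one)
  then have ji: "j \<noteq> i" using zj by auto
  define R where "R = {..<k} - {j, i}"
  define f where "f l = (1 - z l) powr r" for l
  have "powr_gap r (1 - (z j + z i) / 2) ((z i - z j) / 2) = (1 - z i) powr (1 - r) - 1"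
    unfolding powr_gap_def zj by simp
  then have "z i * sum_prod_omit R f < prod f R * ((1 - z i) powr (1 - r) - 1)"
    using maximizer_imbalance [OF j i(1) ji] zj i(2) unfolding R_def f_def by simp
  then show False
    using maximizer_rest_lower_bound [OF j zj i] maximizer_pair_fun(1) [OF j i(1) ji]
    unfolding R_def f_def by (simp add: algebra_simps)
qed

lemma maximizer_eq_uniform_vec:
  assumes "k \<ge> 1"
  shows "z = uniform_vec k"
proof -
  define c where "c = z 0"
  have z_c: "z i = c" if "i < k" for i
    unfolding c_def using that assms maximizer_pos by (intro maximizer_pos_coords_eq) auto
  have "sum z {..<k} = 1" "\<forall>i\<ge>k. z i = 0"
    using z_mem by (auto simp: std_simplex_trunc_def std_simplex_def)
  moreover have "sum z {..<k} = real k * c"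
    using z_c by simp
  ultimately show ?thesis
    using assms z_c by (auto simp: uniform_vec_def fun_eq_iff not_less field_simps)
qed

end

lemma Fk_le_max_uniform_vec:
  assumes r: "r > 1" and k: "k \<ge> 1" and y: "y \<in> std_simplex k"
  shows "Fk k r y \<le> max 1 (Fk k r (uniform_vec k))"
proof -
  have "std_simplex_trunc k \<noteq> {}" "r > 0"
    using uniform_vec_mem_std_simplex_trunc [OF k] r by auto
  then obtain z where z: "z \<in> std_simplex_trunc k"
    and z_max: "\<And>y. y \<in> std_simplex_trunc k \<Longrightarrow> Fk k r y \<le> Fk k r z"
    using continuous_attains_sup [OF compact_std_simplex_trunc _ continuous_on_Fk] by metis
  have "Fk k r y = Fk k r (\<lambda>i. if i < k then y i else 0)"
    by (rule Fk_cong) simp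
  also have "\<dots> \<le> Fk k r z"
    using y by (intro z_max restrict_mem_std_simplex_trunc)
  also have "\<dots> \<le> max 1 (Fk k r (uniform_vec k))"
  proof (cases "\<exists>i<k. z i = 1")
    case True
    then obtain i where i: "i < k" "z i = 1" by blast
    have "z \<in> std_simplex k" using z by (simp add: std_simplex_trunc_def)
    then have "Fk k r z = Fk k r (basis_vec i)"
      using i std_simplex_vertex by (intro Fk_cong) (auto simp: basis_vec_def)
    then show ?thesis using Fk_basis_vec [OF i(1)] by simp
  next
    case False
    then have "z i < 1" if "i < k" for i
      using that z std_simplex_le_one [of z k i] by (force simp: std_simplex_trunc_def)
    then have "z = uniform_vec k"
      using r z z_max k by (intro maximizer_eq_uniform_vec)
    then show ?thesis by simp
  qed
  finally show ?thesis .
qed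

section \<open>Bounding Pk\<close>

lemma Pk_basis_vec:
  assumes "i < k"
  shows "Pk k p (basis_vec i) = 1"
proof -
  let ?g = "\<lambda>l. basis_vec i l powr (1 / p) * (\<Prod>j\<in>{..<k} - {l}. (1 - basis_vec i j) powr (1 / p))"
  have "Pk k p (basis_vec i) = ?g i + sum ?g ({..<k} - {i})"
    unfolding Pk_def Let_def using assms by (simp add: sum.remove)
  also have "?g i = 1"
    by (auto simp: basis_vec_def intro: prod.neutral)
  also have "sum ?g ({..<k} - {i}) = 0"
    by (auto simp: basis_vec_def intro: sum.neutral)
  finally show ?thesis by simp
qed

lemma Pk_uniform_vec:
  "Pk k p (uniform_vec k)
    = real k * (1 / real k) powr (1 / p) * ((1 - 1 / real k) powr (1 / p)) ^ (k - 1)"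
proof -
  have "Pk k p (uniform_vec k)
      = (\<Sum>i<k. (1 / real k) powr (1 / p) * (\<Prod>j\<in>{..<k} - {i}. (1 - 1 / real k) powr (1 / p)))"
    unfolding Pk_def uniform_vec_def Let_def
    by (intro sum.cong arg_cong2 [where f = "(*)"] prod.cong) auto
  then show ?thesis by (simp add: card_Diff_singleton)
qed

lemma Pk_uniform_vec_eq_theta:
  assumes "k \<ge> 1"
  shows "Pk k p (uniform_vec k) = theta k p"
proof (cases "k = 1")
  case False
  then have k: "k \<ge> 2" using assms by simp
  have "real (k - 1) ^ (k - 1) / real k ^ k = 1 / real k * (1 - 1 / real k) ^ (k - 1)"
    using k by (cases k) (auto simp: power_divide field_simps of_nat_diff)
  then have "theta k p = real k * (1 / real k * (1 - 1 / real k) ^ (k - 1)) powr (1 / p)"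
    using False by (simp only: theta_def if_False)
  also have "\<dots> = real k * (1 / real k) powr (1 / p) * ((1 - 1 / real k) powr (1 / p)) ^ (k - 1)"
    using k by (subst powr_mult) (auto simp: power_powr_commute)
  finally show ?thesis by (simp add: Pk_uniform_vec)
qed (simp add: Pk_uniform_vec theta_def)

lemma Pk_le_Fk_powr:
  assumes p: "1 < p" and y: "y \<in> std_simplex k"
  shows "Pk k p y \<le> Fk k (1 / (p - 1)) y powr (1 - 1 / p)"
proof -
  define r where "r = 1 / (p - 1)"
  define D where "D i = (\<Prod>j\<in>{..<k} - {i}. (1 - y j) powr r)" for i
  have "r * (1 - 1 / p) = 1 / p" using p by (simp add: r_def field_simps)
  then have "(\<Prod>j\<in>{..<k} - {i}. (1 - y j) powr (1 / p)) = D i powr (1 - 1 / p)" for i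
    unfolding D_def prod_powr_distrib powr_powr by simp
  then have "Pk k p y = (\<Sum>i<k. y i powr (1 / p) * D i powr (1 - 1 / p))"
    unfolding Pk_def Let_def by simp
  also have "\<dots> \<le> sum D {..<k} powr (1 - 1 / p)"
    using y p
    by (intro sum_powr_mult_le_powr_sum) (auto simp: std_simplex_def D_def intro: prod_nonneg)
  also have "sum D {..<k} = Fk k r y"
    unfolding Fk_def sum_prod_omit_def D_def ..
  finally show ?thesis unfolding r_def .
qed

lemma Pk_uniform_vec_eq_Fk_powr:
  assumes p: "1 < p" and k: "k \<ge> 1"
  shows "Pk k p (uniform_vec k) = Fk k (1 / (p - 1)) (uniform_vec k) powr (1 - 1 / p)"
proof -
  define x where "x = 1 - 1 / real k"
  have x: "0 \<le> x" using k by (simp add: x_def)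
  have "(1 / (p - 1)) * (1 - 1 / p) = 1 / p" using p by (simp add: field_simps)
  then have "Fk k (1 / (p - 1)) (uniform_vec k) powr (1 - 1 / p)
      = real k powr (1 - 1 / p) * (x powr (1 / p)) ^ (k - 1)"
    using x by (simp add: Fk_uniform_vec x_def powr_mult power_powr_commute powr_powr)
  also have "real k powr (1 - 1 / p) = real k * (1 / real k) powr (1 / p)"
    using k by (simp add: powr_diff powr_divide)
  finally show ?thesis by (simp add: Pk_uniform_vec x_def)
qed

lemma Pk_le_max_one_theta:
  assumes p: "1 < p" "p < 2" and k: "k \<ge> 1" and y: "y \<in> std_simplex k"
  shows "Pk k p y \<le> max 1 (theta k p)"
proof -
  define r where "r = 1 / (p - 1)"
  have r: "r > 1" using p by (simp add: r_def field_simps)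
  have e: "0 < 1 - 1 / p" using p by simp
  have "Pk k p y \<le> Fk k r y powr (1 - 1 / p)"
    using Pk_le_Fk_powr [OF p(1) y] by (simp add: r_def)
  also have "\<dots> \<le> max 1 (Fk k r (uniform_vec k)) powr (1 - 1 / p)"
    using e Fk_nonneg Fk_le_max_uniform_vec [OF r k y] by (intro powr_mono2) auto
  also have "\<dots> = max 1 (Fk k r (uniform_vec k) powr (1 - 1 / p))"
    using e Fk_nonneg by (intro max_one_powr) auto
  also have "Fk k r (uniform_vec k) powr (1 - 1 / p) = theta k p"
    using Pk_uniform_vec_eq_Fk_powr [OF p(1) k] Pk_uniform_vec_eq_theta [OF k] by (simp add: r_def)
  finally show ?thesis .
qed

lemma Pk_attains_max_one_theta:
  assumes "k \<ge> 1"
  obtains y where "y \<in> {basis_vec i | i. i < k} \<union> {uniform_vec k}" "y \<in> std_simplex k"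
    "Pk k p y = max 1 (theta k p)"
proof (cases "theta k p \<le> 1")
  case True
  show ?thesis
    by (rule that [of "basis_vec 0"])
      (use True Pk_basis_vec basis_vec_mem_std_simplex assms in auto)
next
  case False
  show ?thesis
    by (rule that [of "uniform_vec k"])
      (use False Pk_uniform_vec_eq_theta uniform_vec_mem_std_simplex_trunc assms in
        \<open>auto simp: std_simplex_trunc_def\<close>)
qed

theorem theorem3p1:
  fixes p :: real and k :: nat
  assumes "1 < p" and "p < 2" and "k \<ge> 1"
  shows "(\<forall>i<k. Pk k p (basis_vec i) = 1)
       \<and> Pk k p (uniform_vec k) = theta k p
       \<and> (\<exists>y\<in>{basis_vec i | i. i < k} \<union> {uniform_vec k}.
            y \<in> std_simplex k \<and> (\<forall>z\<in>std_simplex k. Pk k p z \<le> Pk k p y))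
       \<and> w k p = max 1 (theta k p)"
proof -
  have bound: "\<forall>z\<in>std_simplex k. Pk k p z \<le> max 1 (theta k p)"
    using Pk_le_max_one_theta assms by blast
  obtain y where y: "y \<in> {basis_vec i | i. i < k} \<union> {uniform_vec k}" "y \<in> std_simplex k"
    "Pk k p y = max 1 (theta k p)"
    using Pk_attains_max_one_theta [OF assms(3)] .
  then have "w k p = max 1 (theta k p)"
    unfolding w_def using bound by (intro cSup_eq_maximum image_eqI) auto
  then show ?thesis
    using Pk_basis_vec Pk_uniform_vec_eq_theta [OF assms(3)] bound y by auto
qed

end
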